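(* Let $r\le p$ be positive integers with $p$ prime, and let $S\subseteq\{0,\dots,p-1\}$ with $|S|=k$. If $S$ does not contain an $r$-weighted arithmetic progression modulo $p$, then the code $\mathcal{C}(r,p,S)$ is an $(r,k)$-batch code of dimension $rp$.
   Context: Array construction: let $n=rp$ and $S=\{s_0<\dots<s_{k-1}\}\subseteq\{0,\dots,p-1\}$. For $s,t\in\{0,\dots,p-1\}$ let $D_{s,t}=\{(i,\langle t+is\rangle_p): i=0,\dots,r-1\}$, where $\langle x\rangle_p=x\bmod p$. An information vector $\boldsymbol{x}\in\{0,1\}^n$ is written as an array $(x_{i,j})$, $(i,j)\in\{0,\dots,r-1\}\times\{0,\dots,p-1\}$, and redundancy bits $\rho_{\ell,t}=\sum_{(i,j)\in D_{s_\ell,t}}x_{i,j}\pmod2$ are added for $\ell\in\{0,\dots,k-1\}$, $t\in\{0,\dots,p-1\}$; $\mathcal{C}(r,p,S)$ is the binary code of all words $(\boldsymbol{x},(\rho_{\ell,t}))$. The set $S$ contains no $r$-weighted arithmetic progression modulo $p$ if there do not exist pairwise distinct $s_1,s_2,s_3\in S$ and integers $0<x,y<r-1$ with $x+y<r$ such that $xs_1+ys_2\equiv(x+y)s_3\pmod p$. A binary linear code encoding $n$ information bits is an $(r,k)$-batch code if for every multiset $\{i_1,\dots,i_k\}$ of information indices there exist $k$ mutually disjoint sets $R_1,\dots,R_k$ of coordinates, each of size at most $r$, such that $x_{i_j}$ is a function of the codeword bits indexed by $R_j$. *)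

theory Defs
  imports Main "HOL-Computational_Algebra.Primes"
begin

datatype coord = Info nat nat | Red nat nat

definition sel :: "nat set \<Rightarrow> nat \<Rightarrow> nat" where
  "sel S l = sorted_list_of_set S ! l"

definition diag :: "nat \<Rightarrow> nat \<Rightarrow> nat \<Rightarrow> nat \<Rightarrow> (nat \<times> nat) set" where
  "diag r p s t = {(i, (t + i * s) mod p) | i. i < r}"

definition info_idx :: "nat \<Rightarrow> nat \<Rightarrow> (nat \<times> nat) set" where
  "info_idx r p = {0..<r} \<times> {0..<p}"

text \<open>Messages: binary arrays indexed by the information index set
  (value False outside, as a canonical representative).\<close>
definition messages :: "'i set \<Rightarrow> ('i \<Rightarrow> bool) set" where
  "messages I = {x. \<forall>i. i \<notin> I \<longrightarrow> \<not> x i}"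

definition parity :: "(nat \<times> nat \<Rightarrow> bool) \<Rightarrow> (nat \<times> nat) set \<Rightarrow> bool" where
  "parity x A = odd (card {a \<in> A. x a})"

definition coords :: "nat \<Rightarrow> nat \<Rightarrow> nat set \<Rightarrow> coord set" where
  "coords r p S = {Info i j | i j. i < r \<and> j < p} \<union> {Red l t | l t. l < card S \<and> t < p}"

definition encode :: "nat \<Rightarrow> nat \<Rightarrow> nat set \<Rightarrow> (nat \<times> nat \<Rightarrow> bool) \<Rightarrow> coord \<Rightarrow> bool" where
  "encode r p S x c = (case c of
      Info i j \<Rightarrow> i < r \<and> j < p \<and> x (i, j)
    | Red l t \<Rightarrow> l < card S \<and> t < p \<and> parity x (diag r p (sel S l) t))"

definition code :: "nat \<Rightarrow> nat \<Rightarrow> nat set \<Rightarrow> (coord \<Rightarrow> bool) set" where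
  "code r p S = encode r p S ` messages (info_idx r p)"

definition no_weighted_AP :: "nat \<Rightarrow> nat \<Rightarrow> nat set \<Rightarrow> bool" where
  "no_weighted_AP r p S \<longleftrightarrow>
     \<not> (\<exists>s1\<in>S. \<exists>s2\<in>S. \<exists>s3\<in>S. \<exists>x y :: int.
          s1 \<noteq> s2 \<and> s1 \<noteq> s3 \<and> s2 \<noteq> s3 \<and>
          0 < x \<and> x < int r - 1 \<and> 0 < y \<and> y < int r - 1 \<and> x + y < int r \<and>
          (x * int s1 + y * int s2) mod int p = ((x + y) * int s3) mod int p)"

text \<open>(r,k)-batch code: for every multiset of k information indices
  (given as a list/indexing req 0..k-1) there are k pairwise disjoint
  coordinate sets R_j of size at most r such that the requested bit
  req j is a function of the codeword bits indexed by R_j.\<close>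
definition batch_code ::
  "'i set \<Rightarrow> 'c set \<Rightarrow> (('i \<Rightarrow> bool) \<Rightarrow> 'c \<Rightarrow> bool) \<Rightarrow> nat \<Rightarrow> nat \<Rightarrow> bool" where
  "batch_code I Cs E r k \<longleftrightarrow>
     (\<forall>req :: nat \<Rightarrow> 'i. (\<forall>j<k. req j \<in> I) \<longrightarrow>
        (\<exists>R :: nat \<Rightarrow> 'c set.
           (\<forall>j<k. R j \<subseteq> Cs \<and> finite (R j) \<and> card (R j) \<le> r) \<and>
           (\<forall>j1<k. \<forall>j2<k. j1 \<noteq> j2 \<longrightarrow> R j1 \<inter> R j2 = {}) \<and>
           (\<forall>j<k. \<exists>g :: ('c \<Rightarrow> bool) \<Rightarrow> bool.
               \<forall>x \<in> messages I. g (\<lambda>c. if c \<in> R j then E x c else False) = x (req j))))"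

end

theory Submission
  imports Defs
begin

text \<open>
  Read the array as the grid \<open>{0..<r} \<times> \<int>/p\<close>; the diagonal \<open>D(s,t)\<close> is then a line of slope \<open>s\<close>,
  and since \<open>r \<le> p\<close> with \<open>p\<close> prime, two lines of distinct slopes meet in at most one point.
  The first request for a bit is served by the bit itself. A repeated request for the point \<open>P\<close>
  is served by a parity bit of some slope \<open>s\<^sub>l\<close> together with the other bits of its line through \<open>P\<close>;
  the slopes are chosen greedily. A slope is forbidden if its line through \<open>P\<close> hits another
  requested point (at most one slope per point), or if it clashes with an earlier repeated request
  \<open>Q\<close>: the same slope when \<open>Q = P\<close>, a line meeting the line used for \<open>Q\<close> otherwise. Two lines
  through \<open>P\<close> meeting a line of a third slope would form a triangle whose side slopes yield an
  \<open>r\<close>-weighted arithmetic progression, so each earlier request forbids at most one slope, and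
  fewer than \<open>k\<close> slopes are forbidden in total.
\<close>

lemma dvd_abs_less_imp_zero:
  fixes x m :: int
  assumes "m dvd x" "\<bar>x\<bar> < \<bar>m\<bar>"
  shows "x = 0"
  using dvd_imp_le_int[of x m] assms by fastforce

text \<open>The line of slope \<open>s\<close> through \<open>X\<close> is the diagonal \<open>D(s,t)\<close> with \<open>t = line_offset p s X\<close>.\<close>

definition line_offset :: "nat \<Rightarrow> nat \<Rightarrow> nat \<times> nat \<Rightarrow> nat" where
  "line_offset p s X = nat ((int (snd X) - int (fst X) * int s) mod int p)"

lemma line_offset_less: "0 < p \<Longrightarrow> line_offset p s X < p"
  unfolding line_offset_def by (simp add: nat_less_iff)

lemma line_offset_eq_iff:
  assumes "0 < p"
  shows "line_offset p s X = line_offset p s Y \<longleftrightarrow>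
    int p dvd int (snd X) - int (snd Y) - (int (fst X) - int (fst Y)) * int s"
  using assms unfolding line_offset_def
  by (simp add: eq_nat_nat_iff mod_eq_dvd_iff algebra_simps)

lemma mem_diag_iff:
  assumes "0 < p" "t < p"
  shows "X \<in> diag r p s t \<longleftrightarrow> X \<in> info_idx r p \<and> line_offset p s X = t"
proof -
  obtain i c where X: "X = (i, c)" by fastforce
  have "c = (t + i * s) mod p \<longleftrightarrow> c < p \<and> line_offset p s X = t"
  proof -
    have "c = (t + i * s) mod p \<longleftrightarrow> c < p \<and> int c mod int p = (int t + int i * int s) mod int p"
      by (metis mod_less mod_less_divisor assms(1) of_nat_mod of_nat_add of_nat_mult of_nat_eq_iff)
    also have "\<dots> \<longleftrightarrow> c < p \<and> (int c - int i * int s) mod int p = int t mod int p"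
      by (simp add: mod_eq_dvd_iff algebra_simps)
    also have "\<dots> \<longleftrightarrow> c < p \<and> (int c - int i * int s) mod int p = int t"
      using assms by simp
    finally show ?thesis unfolding line_offset_def X by auto
  qed
  then show ?thesis unfolding diag_def info_idx_def X by auto
qed

lemma same_row_imp_eq:
  assumes "0 < p" "X \<in> info_idx r p" "Y \<in> info_idx r p" "fst X = fst Y"
    "line_offset p s X = line_offset p s Y"
  shows "X = Y"
proof -
  have "int p dvd int (snd X) - int (snd Y)"
    using line_offset_eq_iff[OF assms(1), THEN iffD1, OF assms(5)] assms(4) by simp
  moreover have "snd X < p" "snd Y < p"
    using assms(2,3) unfolding info_idx_def by auto
  then have "\<bar>int (snd X) - int (snd Y)\<bar> < \<bar>int p\<bar>" by linarith
  ultimately have "int (snd X) - int (snd Y) = 0" by (rule dvd_abs_less_imp_zero)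
  then have "snd X = snd Y" by simp
  then show ?thesis using assms(4) by (simp add: prod_eq_iff)
qed

lemma two_slopes_imp_eq:
  assumes "prime p" "r \<le> p" "s \<noteq> s'" "s < p" "s' < p"
    "X \<in> info_idx r p" "Y \<in> info_idx r p"
    "line_offset p s X = line_offset p s Y" "line_offset p s' X = line_offset p s' Y"
  shows "X = Y"
proof -
  have p0: "0 < p" using assms(1) prime_gt_0_nat by blast
  let ?di = "int (fst X) - int (fst Y)" and ?dc = "int (snd X) - int (snd Y)"
  have "int p dvd ?dc - ?di * int s" "int p dvd ?dc - ?di * int s'"
    using assms(8,9) line_offset_eq_iff[OF p0] by auto
  then have "int p dvd (?dc - ?di * int s) - (?dc - ?di * int s')" by (rule dvd_diff)
  also have "(?dc - ?di * int s) - (?dc - ?di * int s') = ?di * (int s' - int s)"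
    by (simp add: algebra_simps)
  finally have "int p dvd ?di \<or> int p dvd int s' - int s"
    using assms(1) prime_dvd_mult_iff[of "int p"] by simp
  moreover have "\<bar>int s' - int s\<bar> < \<bar>int p\<bar>" using assms(4,5) by linarith
  then have "\<not> int p dvd int s' - int s"
    using dvd_abs_less_imp_zero[of "int p" "int s' - int s"] assms(3) by auto
  ultimately have "int p dvd ?di" by blast
  moreover have "fst X < p" "fst Y < p" using assms(2,6,7) unfolding info_idx_def by auto
  then have "\<bar>?di\<bar> < \<bar>int p\<bar>" by linarith
  ultimately have "?di = 0" by (rule dvd_abs_less_imp_zero)
  then have "fst X = fst Y" by simp
  then show ?thesis using same_row_imp_eq[OF p0 assms(6,7)] assms(8) by blast
qed

lemma weighted_AP_of_sorted_rows:
  assumes "a \<in> S" "b \<in> S" "c \<in> S" "a \<noteq> b" "a \<noteq> c" "b \<noteq> c"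
    and "0 \<le> u" "u < v" "v < w" "w < int r"
    and "int p dvd (v - u) * int a + (w - v) * int b + (u - w) * int c"
  shows "\<not> no_weighted_AP r p S"
proof -
  let ?x = "v - u" and ?y = "w - v"
  have "(?x * int a + ?y * int b) mod int p = ((?x + ?y) * int c) mod int p"
    using assms(11) by (simp add: mod_eq_dvd_iff algebra_simps)
  moreover have "0 < ?x" "?x < int r - 1" "0 < ?y" "?y < int r - 1" "?x + ?y < int r"
    using assms(7-10) by linarith+
  ultimately show ?thesis
    unfolding no_weighted_AP_def using assms(1-6) by blast
qed

lemma weighted_AP_of_rows:
  assumes "a \<in> S" "b \<in> S" "c \<in> S" "a \<noteq> b" "a \<noteq> c" "b \<noteq> c"
    and "u \<noteq> v" "v \<noteq> w" "u \<noteq> w" "0 \<le> u" "0 \<le> v" "0 \<le> w" "u < int r" "v < int r" "w < int r"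
    and "int p dvd (v - u) * int a + (w - v) * int b + (u - w) * int c"
  shows "\<not> no_weighted_AP r p S"
proof -
  let ?sum = "(v - u) * int a + (w - v) * int b + (u - w) * int c"
  have rotated: "int p dvd e" if "e = ?sum" for e
    using assms(16) unfolding that .
  have reflected: "int p dvd e" if "e = - ?sum" for e
    using assms(16) unfolding that by (simp only: dvd_minus_iff)
  \<comment> \<open>The cyclic sum is invariant under rotating the triangle and changes sign under reflecting
    it, so the rows may be sorted.\<close>
  note sorted = weighted_AP_of_sorted_rows[where r = r and p = p]
  consider "u < v" "v < w" | "v < w" "w < u" | "w < u" "u < v"
    | "u < w" "w < v" | "w < v" "v < u" | "v < u" "u < w"
    using assms(7-9) by linarith
  then show ?thesis
  proof cases
    case 1
    show ?thesis by (rule sorted[OF assms(1-6,10) 1 assms(15,16)])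
  next
    case 2
    have "int p dvd (w - v) * int b + (u - w) * int c + (v - u) * int a"
      by (rule rotated) linarith
    then show ?thesis
      by (rule sorted[OF assms(2,3,1,6) assms(4,5)[symmetric] assms(11) 2 assms(13)])
  next
    case 3
    have "int p dvd (u - w) * int c + (v - u) * int a + (w - v) * int b"
      by (rule rotated) linarith
    then show ?thesis
      by (rule sorted[OF assms(3,1,2) assms(5,6)[symmetric] assms(4,12) 3 assms(14)])
  next
    case 4
    have "int p dvd (w - u) * int c + (v - w) * int b + (u - v) * int a"
      by (rule reflected) (simp add: algebra_simps)
    then show ?thesis
      by (rule sorted[OF assms(3,2,1) assms(6,5,4)[symmetric] assms(10) 4 assms(14)])
  next
    case 5
    have "int p dvd (v - w) * int b + (u - v) * int a + (w - u) * int c"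
      by (rule reflected) (simp add: algebra_simps)
    then show ?thesis
      by (rule sorted[OF assms(2,1,3) assms(4)[symmetric] assms(6,5,12) 5 assms(13)])
  next
    case 6
    have "int p dvd (u - v) * int a + (w - u) * int c + (v - w) * int b"
      by (rule reflected) (simp add: algebra_simps)
    then show ?thesis
      by (rule sorted[OF assms(1,3,2,5,4) assms(6)[symmetric] assms(11) 6 assms(15)])
  qed
qed

lemma no_weighted_AP_no_triangle:
  assumes "no_weighted_AP r p S" "0 < p"
    and "a \<in> S" "b \<in> S" "c \<in> S" "a \<noteq> b" "a \<noteq> c" "b \<noteq> c"
    and "X \<in> info_idx r p" "Y \<in> info_idx r p" "Z \<in> info_idx r p" "X \<noteq> Y" "Y \<noteq> Z" "X \<noteq> Z"
    and "line_offset p a X = line_offset p a Y" "line_offset p b Y = line_offset p b Z"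
      "line_offset p c Z = line_offset p c X"
  shows False
proof -
  let ?u = "int (fst X)" and ?v = "int (fst Y)" and ?w = "int (fst Z)"
  have "fst X \<noteq> fst Y" using same_row_imp_eq[OF assms(2,9,10) _ assms(15)] assms(12) by blast
  moreover have "fst Y \<noteq> fst Z" using same_row_imp_eq[OF assms(2,10,11) _ assms(16)] assms(13) by blast
  moreover have "fst Z \<noteq> fst X" using same_row_imp_eq[OF assms(2,11,9) _ assms(17)] assms(14) by blast
  ultimately have rows: "?u \<noteq> ?v" "?v \<noteq> ?w" "?u \<noteq> ?w" by auto
  note edge = line_offset_eq_iff[OF assms(2), THEN iffD1]
  have "int p dvd (int (snd X) - int (snd Y) - (?u - ?v) * int a)
      + (int (snd Y) - int (snd Z) - (?v - ?w) * int b)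
      + (int (snd Z) - int (snd X) - (?w - ?u) * int c)"
    by (intro dvd_add edge assms(15-17))
  also have "\<dots> = (?v - ?u) * int a + (?w - ?v) * int b + (?u - ?w) * int c"
    by (simp add: algebra_simps)
  finally have cycle: "int p dvd (?v - ?u) * int a + (?w - ?v) * int b + (?u - ?w) * int c" .
  have "?u < int r" "?v < int r" "?w < int r"
    using assms(9-11) unfolding info_idx_def by auto
  with assms(1) show False
    using weighted_AP_of_rows[OF assms(3-8) rows of_nat_0_le_iff of_nat_0_le_iff of_nat_0_le_iff _ _ _ cycle]
    by blast
qed

lemma card_UN_le_card:
  assumes "finite I" "\<And>i. i \<in> I \<Longrightarrow> card (A i) \<le> 1"
  shows "card (\<Union>i\<in>I. A i) \<le> card I"
proof -
  have "card (\<Union>i\<in>I. A i) \<le> (\<Sum>i\<in>I. card (A i))" by (rule card_UN_le[OF assms(1)])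
  also have "\<dots> \<le> (\<Sum>i\<in>I. 1)" using assms(2) by (rule sum_mono)
  finally show ?thesis by simp
qed

lemma exists_greedy_assignment:
  fixes P :: "(nat \<Rightarrow> 'a) \<Rightarrow> nat \<Rightarrow> bool"
  assumes local: "\<And>\<sigma> \<sigma>' j. (\<And>i. i \<le> j \<Longrightarrow> \<sigma>' i = \<sigma> i) \<Longrightarrow> P \<sigma>' j \<longleftrightarrow> P \<sigma> j"
    and step: "\<And>\<sigma> j. j < n \<Longrightarrow> \<forall>i<j. P \<sigma> i \<Longrightarrow> \<exists>v. P (\<sigma>(j := v)) j"
  shows "\<exists>\<sigma>. \<forall>j<n. P \<sigma> j"
proof -
  have "m \<le> n \<Longrightarrow> \<exists>\<sigma>. \<forall>j<m. P \<sigma> j" for m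
  proof (induction m)
    case (Suc m)
    then obtain \<sigma> where \<sigma>: "\<forall>j<m. P \<sigma> j" by auto
    obtain v where v: "P (\<sigma>(m := v)) m" using step[of m \<sigma>] Suc.prems \<sigma> by auto
    have "P (\<sigma>(m := v)) j" if "j < m" for j
      using local[of j "\<sigma>(m := v)" \<sigma>] \<sigma> that by simp
    with v have "\<forall>j<Suc m. P (\<sigma>(m := v)) j" using less_Suc_eq by auto
    then show ?case by blast
  qed simp
  then show ?thesis by blast
qed

definition first_occurrence :: "(nat \<Rightarrow> 'a) \<Rightarrow> nat \<Rightarrow> bool" where
  "first_occurrence f j \<longleftrightarrow> f j \<notin> f ` {..<j}"

lemma image_first_occurrences: "f ` {..<n} = f ` {j. j < n \<and> first_occurrence f j}"
proof
  show "f ` {..<n} \<subseteq> f ` {j. j < n \<and> first_occurrence f j}"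
  proof
    fix y assume "y \<in> f ` {..<n}"
    then obtain j where j: "j < n" "f j = y" by auto
    define j0 where "j0 = (LEAST i. f i = y)"
    have j0: "f j0 = y" unfolding j0_def using j(2) by (rule LeastI)
    have "j0 \<le> j" unfolding j0_def using j(2) by (rule Least_le)
    have "first_occurrence f j0"
      unfolding first_occurrence_def
    proof
      assume "f j0 \<in> f ` {..<j0}"
      then obtain i where "i < j0" "f i = y" using j0 by auto
      then show False using not_less_Least[of i "\<lambda>i. f i = y"] unfolding j0_def by blast
    qed
    then show "y \<in> f ` {j. j < n \<and> first_occurrence f j}"
      using j0 \<open>j0 \<le> j\<close> j(1) by (intro image_eqI[of _ _ j0]) auto
  qed
qed auto

lemma card_image_plus_repetitions_less:
  assumes "j < n" "\<not> first_occurrence f j"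
  shows "card (f ` {..<n}) + card {i. i < j \<and> \<not> first_occurrence f i} < n"
proof -
  let ?F = "{i. i < n \<and> first_occurrence f i}" and ?J = "{i. i < j \<and> \<not> first_occurrence f i}"
  have "card (f ` {..<n}) \<le> card ?F"
    unfolding image_first_occurrences[of f n] by (rule card_image_le) simp
  moreover have "card (?F \<union> ?J \<union> {j}) = card ?F + card ?J + 1"
    using assms(2) by (subst card_Un_disjoint; auto)+
  moreover have "card (?F \<union> ?J \<union> {j}) \<le> n"
    using card_mono[of "{..<n}" "?F \<union> ?J \<union> {j}"] assms(1) by fastforce
  ultimately show ?thesis by linarith
qed

lemma sel_mem: "finite S \<Longrightarrow> l < card S \<Longrightarrow> sel S l \<in> S"
  unfolding sel_def by (metis nth_mem set_sorted_list_of_set length_sorted_list_of_set)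

lemma sel_eq_iff:
  "finite S \<Longrightarrow> l1 < card S \<Longrightarrow> l2 < card S \<Longrightarrow> sel S l1 = sel S l2 \<longleftrightarrow> l1 = l2"
  unfolding sel_def
  by (metis distinct_sorted_list_of_set nth_eq_iff_index_eq length_sorted_list_of_set)

lemma finite_diag: "finite (diag r p s t)"
  and card_diag_le: "card (diag r p s t) \<le> r"
proof -
  have "diag r p s t = (\<lambda>i. (i, (t + i * s) mod p)) ` {..<r}" unfolding diag_def by auto
  then show "finite (diag r p s t)" "card (diag r p s t) \<le> r"
    using card_image_le[of "{..<r}"] by auto
qed

lemma parity_cong: "(\<And>a. a \<in> A \<Longrightarrow> x a = y a) \<Longrightarrow> parity x A = parity y A"
  unfolding parity_def by (metis (mono_tags, lifting) Collect_cong)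

lemma parity_remove:
  assumes "finite A" "a \<in> A"
  shows "parity x A \<longleftrightarrow> x a \<noteq> parity x (A - {a})"
proof (cases "x a")
  case True
  then have "{b \<in> A. x b} = insert a {b \<in> A - {a}. x b}" using assms(2) by auto
  then show ?thesis using True assms(1) unfolding parity_def by simp
next
  case False
  then have "{b \<in> A. x b} = {b \<in> A - {a}. x b}" by auto
  then show ?thesis using False unfolding parity_def by simp
qed

lemma card_messages: "finite I \<Longrightarrow> card (messages I) = 2 ^ card I"
proof -
  assume "finite I"
  have "messages I = (\<lambda>A i. i \<in> A) ` Pow I"
    unfolding messages_def by (auto intro!: image_eqI[of _ _ "Collect _"])
  moreover have "inj_on (\<lambda>A i. i \<in> A) (Pow I)" by (rule inj_onI) (metis Collect_mem_eq)
  ultimately show ?thesis using \<open>finite I\<close> by (simp add: card_image card_Pow)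
qed

lemma inj_on_encode: "inj_on (encode r p S) (messages (info_idx r p))"
proof (rule inj_onI, rule ext)
  fix x y and q :: "nat \<times> nat"
  assume x: "x \<in> messages (info_idx r p)" and y: "y \<in> messages (info_idx r p)"
    and eq: "encode r p S x = encode r p S y"
  show "x q = y q"
  proof (cases "q \<in> info_idx r p")
    case True
    obtain i j where q: "q = (i, j)" by fastforce
    have "encode r p S x (Info i j) = encode r p S y (Info i j)" using eq by simp
    then show ?thesis using True unfolding q encode_def info_idx_def by simp
  next
    case False
    then show ?thesis using x y unfolding messages_def by blast
  qed
qed

lemma card_code: "card (code r p S) = 2 ^ (r * p)"
proof -
  have "card (code r p S) = card (messages (info_idx r p))"
    unfolding code_def by (rule card_image[OF inj_on_encode])
  also have "\<dots> = 2 ^ (r * p)"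
    by (simp add: card_messages info_idx_def card_cartesian_product)
  finally show ?thesis .
qed

definition info_coord :: "nat \<times> nat \<Rightarrow> coord" where
  "info_coord X = Info (fst X) (snd X)"

lemma info_coord_eq_iff [simp]: "info_coord X = info_coord Y \<longleftrightarrow> X = Y"
  unfolding info_coord_def by (simp add: prod_eq_iff)

lemma Red_ne_info_coord [simp]: "Red l t \<noteq> info_coord X" "info_coord X \<noteq> Red l t"
  unfolding info_coord_def by simp_all

lemma encode_info_coord: "X \<in> info_idx r p \<Longrightarrow> encode r p S x (info_coord X) = x X"
  unfolding info_coord_def encode_def info_idx_def by auto

locale batch_request =
  fixes r p k :: nat and S :: "nat set" and req :: "nat \<Rightarrow> nat \<times> nat"
  assumes r_pos: "0 < r" and r_le_p: "r \<le> p" and prime_p: "prime p"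
    and S_subset: "S \<subseteq> {0..<p}" and card_S: "card S = k"
    and no_AP: "no_weighted_AP r p S"
    and req_mem: "\<And>j. j < k \<Longrightarrow> req j \<in> info_idx r p"
begin

lemma p_pos: "0 < p"
  using prime_p prime_gt_0_nat by blast

lemma finite_S: "finite S"
  using S_subset finite_subset by blast

lemma sel_in_S: "l < k \<Longrightarrow> sel S l \<in> S"
  using sel_mem[OF finite_S] card_S by blast

lemma sel_less: "l < k \<Longrightarrow> sel S l < p"
  using sel_in_S S_subset by fastforce

lemma sel_ne: "l1 < k \<Longrightarrow> l2 < k \<Longrightarrow> l1 \<noteq> l2 \<Longrightarrow> sel S l1 \<noteq> sel S l2"
  using sel_eq_iff[OF finite_S] card_S by blast

definition line :: "nat \<Rightarrow> nat \<times> nat \<Rightarrow> (nat \<times> nat) set" where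
  "line l P = diag r p (sel S l) (line_offset p (sel S l) P)"

lemma mem_line_iff:
  "X \<in> line l P \<longleftrightarrow> X \<in> info_idx r p \<and> line_offset p (sel S l) X = line_offset p (sel S l) P"
  unfolding line_def using mem_diag_iff[OF p_pos line_offset_less[OF p_pos]] by blast

lemma self_mem_line: "P \<in> info_idx r p \<Longrightarrow> P \<in> line l P"
  by (simp add: mem_line_iff)

lemma card_lines_through_point_le_1:
  assumes P: "P \<in> info_idx r p" and "Q \<noteq> P"
  shows "card {l. l < k \<and> Q \<in> line l P} \<le> 1"
proof -
  have "l1 = l2" if "l1 < k" "l2 < k" "Q \<in> line l1 P" "Q \<in> line l2 P" for l1 l2
  proof (rule ccontr)
    assume "l1 \<noteq> l2"
    with that have "Q = P"
      using two_slopes_imp_eq[OF prime_p r_le_p sel_ne sel_less sel_less _ P] by (simp add: mem_line_iff)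
    with \<open>Q \<noteq> P\<close> show False ..
  qed
  then show ?thesis by (auto simp: card_le_Suc0_iff_eq)
qed

lemma card_lines_meeting_line_le_1:
  assumes P: "P \<in> info_idx r p" and l': "l' < k" and P_notin: "P \<notin> line l' P'"
  shows "card {l. l < k \<and> line l P \<inter> line l' P' \<noteq> {}} \<le> 1"
proof -
  have "l1 = l2" if l12: "l1 < k" "l2 < k" and X1: "X1 \<in> line l1 P" "X1 \<in> line l' P'"
    and X2: "X2 \<in> line l2 P" "X2 \<in> line l' P'" for l1 l2 X1 X2
  proof (rule ccontr)
    assume "l1 \<noteq> l2"
    have grid: "X1 \<in> info_idx r p" "X2 \<in> info_idx r p" using X1 X2 by (auto simp: mem_line_iff)
    have "l1 \<noteq> l'" "l2 \<noteq> l'" using X1 X2 P_notin P by (auto simp: mem_line_iff)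
    have "P \<noteq> X1" "P \<noteq> X2" using X1 X2 P_notin by auto
    have "X1 \<noteq> X2"
    proof
      assume "X1 = X2"
      with X1 X2 have "X1 = P"
        using two_slopes_imp_eq[OF prime_p r_le_p sel_ne[OF l12 \<open>l1 \<noteq> l2\<close>]
            sel_less[OF l12(1)] sel_less[OF l12(2)] grid(1) P]
        by (simp add: mem_line_iff)
      with \<open>P \<noteq> X1\<close> show False by simp
    qed
    show False
    proof (rule no_weighted_AP_no_triangle[OF no_AP p_pos sel_in_S sel_in_S sel_in_S
          sel_ne sel_ne sel_ne P grid \<open>P \<noteq> X1\<close> \<open>X1 \<noteq> X2\<close> \<open>P \<noteq> X2\<close>])
      show "line_offset p (sel S l1) P = line_offset p (sel S l1) X1"
        using X1 by (simp add: mem_line_iff)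
      show "line_offset p (sel S l') X1 = line_offset p (sel S l') X2"
        using X1 X2 by (simp add: mem_line_iff)
      show "line_offset p (sel S l2) X2 = line_offset p (sel S l2) P"
        using X2 by (simp add: mem_line_iff)
    qed (use l12 l' \<open>l1 \<noteq> l2\<close> \<open>l1 \<noteq> l'\<close> \<open>l2 \<noteq> l'\<close> in auto)
  qed
  then show ?thesis by (auto simp: card_le_Suc0_iff_eq)
qed

definition admissible :: "(nat \<Rightarrow> nat) \<Rightarrow> nat \<Rightarrow> bool" where
  "admissible \<sigma> j \<longleftrightarrow> first_occurrence req j \<or>
     (\<sigma> j < k \<and> (\<forall>i<k. req i \<in> line (\<sigma> j) (req j) \<longrightarrow> req i = req j) \<and>
      (\<forall>i<j. \<not> first_occurrence req i \<longrightarrow>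
         (if req i = req j then \<sigma> i \<noteq> \<sigma> j
          else line (\<sigma> j) (req j) \<inter> line (\<sigma> i) (req i) = {})))"

definition forbidden_slopes :: "(nat \<Rightarrow> nat) \<Rightarrow> nat \<Rightarrow> nat set" where
  "forbidden_slopes \<sigma> j =
     (\<Union>Q\<in>req ` {..<k} - {req j}. {l. l < k \<and> Q \<in> line l (req j)}) \<union>
     (\<Union>i\<in>{i. i < j \<and> \<not> first_occurrence req i}.
        if req i = req j then {\<sigma> i} else {l. l < k \<and> line l (req j) \<inter> line (\<sigma> i) (req i) \<noteq> {}})"

lemma admissible_if_not_forbidden:
  assumes "l < k" "l \<notin> forbidden_slopes \<sigma> j"
  shows "admissible (\<sigma>(j := l)) j"
  unfolding admissible_def
proof (intro disjI2 conjI allI impI)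
  fix i assume "i < k" "req i \<in> line ((\<sigma>(j := l)) j) (req j)"
  then show "req i = req j" using assms unfolding forbidden_slopes_def by auto
next
  fix i assume "i < j" "\<not> first_occurrence req i"
  with assms show "if req i = req j then (\<sigma>(j := l)) i \<noteq> (\<sigma>(j := l)) j
      else line ((\<sigma>(j := l)) j) (req j) \<inter> line ((\<sigma>(j := l)) i) (req i) = {}"
    unfolding forbidden_slopes_def by (auto split: if_splits)
qed (use assms in simp)

lemma card_forbidden_slopes_less:
  assumes j: "j < k" and repeated: "\<not> first_occurrence req j" and prev: "\<forall>i<j. admissible \<sigma> i"
  shows "card (forbidden_slopes \<sigma> j) < k"
proof -
  let ?P = "req j" and ?J = "{i. i < j \<and> \<not> first_occurrence req i}"
  let ?hits = "\<Union>Q\<in>req ` {..<k} - {?P}. {l. l < k \<and> Q \<in> line l ?P}"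
  let ?conflict = "\<lambda>i. if req i = ?P then {\<sigma> i}
    else {l. l < k \<and> line l ?P \<inter> line (\<sigma> i) (req i) \<noteq> {}}"
  have P: "?P \<in> info_idx r p" using req_mem[OF j] .
  have "card ?hits \<le> card (req ` {..<k} - {?P})"
    by (rule card_UN_le_card) (use card_lines_through_point_le_1[OF P] in auto)
  also have "\<dots> \<le> card (req ` {..<k})" by (rule card_Diff1_le)
  finally have card_hits: "card ?hits \<le> card (req ` {..<k})" .
  have "card (?conflict i) \<le> 1" if "i \<in> ?J" for i
  proof -
    have "admissible \<sigma> i" using prev that by auto
    then have "\<sigma> i < k" "req i \<noteq> ?P \<Longrightarrow> ?P \<notin> line (\<sigma> i) (req i)"
      using that j unfolding admissible_def by auto
    then show ?thesis using card_lines_meeting_line_le_1[OF P] by auto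
  qed
  then have "card (\<Union>i\<in>?J. ?conflict i) \<le> card ?J" by (intro card_UN_le_card) auto
  then show ?thesis
    using card_hits card_image_plus_repetitions_less[OF j repeated]
      card_Un_le[of ?hits "\<Union>i\<in>?J. ?conflict i"]
    unfolding forbidden_slopes_def by linarith
qed

lemma admissible_slope_exists:
  assumes j: "j < k" and prev: "\<forall>i<j. admissible \<sigma> i"
  shows "\<exists>l. admissible (\<sigma>(j := l)) j"
proof (cases "first_occurrence req j")
  case True
  then show ?thesis unfolding admissible_def by blast
next
  case False
  have "finite (forbidden_slopes \<sigma> j)" unfolding forbidden_slopes_def by auto
  with card_forbidden_slopes_less[OF j False prev] have "\<not> {..<k} \<subseteq> forbidden_slopes \<sigma> j"
    using card_mono[of "forbidden_slopes \<sigma> j" "{..<k}"] by auto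
  then show ?thesis using admissible_if_not_forbidden by blast
qed

lemma admissible_local:
  "(\<And>i. i \<le> j \<Longrightarrow> \<sigma>' i = \<sigma> i) \<Longrightarrow> admissible \<sigma>' j \<longleftrightarrow> admissible \<sigma> j"
  unfolding admissible_def by auto

lemma exists_admissible_assignment: "\<exists>\<sigma>. \<forall>j<k. admissible \<sigma> j"
  by (rule exists_greedy_assignment[OF admissible_local admissible_slope_exists])

lemma finite_line: "finite (line l P)"
  and card_line_le: "card (line l P) \<le> r"
  unfolding line_def by (rule finite_diag card_diag_le)+

lemma encode_Red_line:
  "l < k \<Longrightarrow> encode r p S x (Red l (line_offset p (sel S l) P)) = parity x (line l P)"
  unfolding encode_def line_def using card_S line_offset_less[OF p_pos] by simp

definition recovery_set :: "(nat \<Rightarrow> nat) \<Rightarrow> nat \<Rightarrow> coord set" where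
  "recovery_set \<sigma> j = (if first_occurrence req j then {info_coord (req j)}
     else insert (Red (\<sigma> j) (line_offset p (sel S (\<sigma> j)) (req j)))
       (info_coord ` (line (\<sigma> j) (req j) - {req j})))"

lemma finite_recovery_set: "finite (recovery_set \<sigma> j)"
  unfolding recovery_set_def by (simp add: finite_line)

context
  fixes \<sigma> :: "nat \<Rightarrow> nat"
  assumes admissible_all: "\<And>j. j < k \<Longrightarrow> admissible \<sigma> j"
begin

lemma slope_less: "j < k \<Longrightarrow> \<not> first_occurrence req j \<Longrightarrow> \<sigma> j < k"
  using admissible_all unfolding admissible_def by blast

lemma recovery_set_subset:
  assumes "j < k"
  shows "recovery_set \<sigma> j \<subseteq> coords r p S"
proof -
  have "info_coord X \<in> coords r p S" if "X \<in> info_idx r p" for X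
    using that unfolding info_coord_def coords_def info_idx_def by (cases X) auto
  moreover have "Red l t \<in> coords r p S" if "l < k" "t < p" for l t
    using that card_S unfolding coords_def by auto
  ultimately show ?thesis
    using req_mem[OF assms] slope_less[OF assms] line_offset_less[OF p_pos]
    unfolding recovery_set_def by (auto simp: mem_line_iff)
qed

lemma card_recovery_set_le:
  assumes "j < k"
  shows "card (recovery_set \<sigma> j) \<le> r"
proof (cases "first_occurrence req j")
  case True
  then show ?thesis using r_pos unfolding recovery_set_def by simp
next
  case False
  let ?L = "line (\<sigma> j) (req j)"
  have "card (info_coord ` (?L - {req j})) \<le> card (?L - {req j})" by (rule card_image_le) (simp add: finite_line)
  also have "\<dots> = card ?L - 1" using finite_line self_mem_line[OF req_mem[OF assms]] by simp
  also have "\<dots> \<le> r - 1" using card_line_le[of "\<sigma> j" "req j"] by linarith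
  finally have "card (insert (Red (\<sigma> j) (line_offset p (sel S (\<sigma> j)) (req j)))
      (info_coord ` (?L - {req j}))) \<le> r"
    by (rule card_insert_le_m1[OF r_pos])
  then show ?thesis using False unfolding recovery_set_def by simp
qed

lemma info_coord_notin_recovery_set:
  assumes "i < k" "j < k" "\<not> first_occurrence req j"
  shows "info_coord (req i) \<notin> recovery_set \<sigma> j"
  using admissible_all[OF assms(2)] assms unfolding admissible_def recovery_set_def by auto

lemma recovery_sets_disjoint_repeated:
  assumes ij: "i < j" "j < k" and repeated: "\<not> first_occurrence req i" "\<not> first_occurrence req j"
  shows "recovery_set \<sigma> i \<inter> recovery_set \<sigma> j = {}"
proof -
  let ?Li = "line (\<sigma> i) (req i)" and ?Lj = "line (\<sigma> j) (req j)"
  have adm: "if req i = req j then \<sigma> i \<noteq> \<sigma> j else ?Lj \<inter> ?Li = {}"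
    using admissible_all[OF ij(2)] ij repeated unfolding admissible_def by auto
  have info_disjoint: "(?Li - {req i}) \<inter> (?Lj - {req j}) = {}"
  proof (cases "req i = req j")
    case True
    have "X = req j" if "X \<in> ?Li" "X \<in> ?Lj" for X
      using that True adm two_slopes_imp_eq[OF prime_p r_le_p sel_ne sel_less sel_less _ req_mem[OF ij(2)]]
        slope_less[OF _ repeated(1)] slope_less[OF ij(2) repeated(2)] ij
      by (auto simp: mem_line_iff)
    then show ?thesis using True by blast
  next
    case False
    then show ?thesis using adm by auto
  qed
  have "Red (\<sigma> i) (line_offset p (sel S (\<sigma> i)) (req i))
      \<noteq> Red (\<sigma> j) (line_offset p (sel S (\<sigma> j)) (req j))"
  proof
    assume same_Red: "Red (\<sigma> i) (line_offset p (sel S (\<sigma> i)) (req i))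
      = Red (\<sigma> j) (line_offset p (sel S (\<sigma> j)) (req j))"
    then have "?Li = ?Lj" unfolding line_def by (metis coord.inject(2))
    moreover have "req j \<in> ?Lj" using self_mem_line req_mem ij(2) by blast
    ultimately show False using adm same_Red by (auto split: if_splits)
  qed
  then show ?thesis
    using info_disjoint repeated unfolding recovery_set_def by auto
qed

lemma recovery_sets_disjoint:
  assumes "i < k" "j < k" "i \<noteq> j"
  shows "recovery_set \<sigma> i \<inter> recovery_set \<sigma> j = {}"
proof -
  have "recovery_set \<sigma> i \<inter> recovery_set \<sigma> j = {}" if "i < j" "j < k" for i j
  proof (cases "first_occurrence req i"; cases "first_occurrence req j")
    assume "first_occurrence req i" "first_occurrence req j"
    then show ?thesis using that unfolding recovery_set_def first_occurrence_def by auto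
  next
    assume "\<not> first_occurrence req i" "\<not> first_occurrence req j"
    then show ?thesis using recovery_sets_disjoint_repeated that by blast
  qed (use that info_coord_notin_recovery_set in \<open>auto simp: recovery_set_def\<close>)
  then show ?thesis using assms by (metis Int_commute linorder_neqE_nat)
qed

lemma recovery_set_decodes:
  assumes j: "j < k"
  shows "\<exists>g. \<forall>x \<in> messages (info_idx r p).
    g (\<lambda>c. if c \<in> recovery_set \<sigma> j then encode r p S x c else False) = x (req j)"
proof -
  let ?w = "\<lambda>x c. if c \<in> recovery_set \<sigma> j then encode r p S x c else False"
  show ?thesis
  proof (cases "first_occurrence req j")
    case True
    then have "?w x (info_coord (req j)) = x (req j)" for x
      using encode_info_coord[OF req_mem[OF j]] unfolding recovery_set_def by simp
    then show ?thesis by (intro exI[of _ "\<lambda>w. w (info_coord (req j))"] ballI)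
  next
    case repeated: False
    let ?P = "req j" and ?l = "\<sigma> j"
    let ?L = "line ?l ?P" and ?red = "Red ?l (line_offset p (sel S ?l) ?P)"
    have "?red \<in> recovery_set \<sigma> j" using repeated unfolding recovery_set_def by simp
    then have red: "?w x ?red = parity x ?L" for x
      using encode_Red_line[OF slope_less[OF j repeated]] by simp
    have others: "parity (\<lambda>X. ?w x (info_coord X)) (?L - {?P}) = parity x (?L - {?P})" for x
    proof (rule parity_cong)
      fix X assume X: "X \<in> ?L - {?P}"
      then have "info_coord X \<in> recovery_set \<sigma> j" using repeated unfolding recovery_set_def by simp
      moreover have "X \<in> info_idx r p" using X by (simp add: mem_line_iff)
      ultimately show "?w x (info_coord X) = x X" using encode_info_coord by simp
    qed
    have remove: "parity x ?L \<longleftrightarrow> x ?P \<noteq> parity x (?L - {?P})" for x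
      by (rule parity_remove[OF finite_line self_mem_line[OF req_mem[OF j]]])
    have "(?w x ?red \<noteq> parity (\<lambda>X. ?w x (info_coord X)) (?L - {?P})) = x ?P" for x
      unfolding red others using remove[of x] by (cases "x ?P") simp_all
    then show ?thesis
      by (intro exI[of _ "\<lambda>w. w ?red \<noteq> parity (\<lambda>X. w (info_coord X)) (?L - {?P})"] ballI)
  qed
qed

end

lemma exists_recovery_sets:
  "\<exists>R :: nat \<Rightarrow> coord set.
     (\<forall>j<k. R j \<subseteq> coords r p S \<and> finite (R j) \<and> card (R j) \<le> r) \<and>
     (\<forall>j1<k. \<forall>j2<k. j1 \<noteq> j2 \<longrightarrow> R j1 \<inter> R j2 = {}) \<and>
     (\<forall>j<k. \<exists>g. \<forall>x \<in> messages (info_idx r p).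
        g (\<lambda>c. if c \<in> R j then encode r p S x c else False) = x (req j))"
proof -
  obtain \<sigma> where \<sigma>: "\<And>j. j < k \<Longrightarrow> admissible \<sigma> j"
    using exists_admissible_assignment by blast
  have "\<forall>j<k. recovery_set \<sigma> j \<subseteq> coords r p S \<and> finite (recovery_set \<sigma> j)
      \<and> card (recovery_set \<sigma> j) \<le> r"
    using recovery_set_subset[OF \<sigma>] finite_recovery_set card_recovery_set_le[OF \<sigma>] by blast
  moreover have "\<forall>j1<k. \<forall>j2<k. j1 \<noteq> j2 \<longrightarrow> recovery_set \<sigma> j1 \<inter> recovery_set \<sigma> j2 = {}"
    using recovery_sets_disjoint[OF \<sigma>] by blast
  moreover have "\<forall>j<k. \<exists>g. \<forall>x \<in> messages (info_idx r p).
      g (\<lambda>c. if c \<in> recovery_set \<sigma> j then encode r p S x c else False) = x (req j)"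
    using recovery_set_decodes[OF \<sigma>] by blast
  ultimately show ?thesis by (intro exI[of _ "recovery_set \<sigma>"] conjI)
qed

end

theorem theorem9:
  fixes r p k :: nat and S :: "nat set"
  assumes "0 < r" and "r \<le> p" and "prime p"
    and "S \<subseteq> {0..<p}" and "card S = k"
    and "no_weighted_AP r p S"
  shows "batch_code (info_idx r p) (coords r p S) (encode r p S) r k
         \<and> card (code r p S) = 2 ^ (r * p)"
proof
  show "batch_code (info_idx r p) (coords r p S) (encode r p S) r k"
    unfolding batch_code_def
  proof (intro allI impI)
    fix req :: "nat \<Rightarrow> nat \<times> nat"
    assume "\<forall>j<k. req j \<in> info_idx r p"
    with assms interpret batch_request r p k S req
      by unfold_locales auto
    show "\<exists>R. (\<forall>j<k. R j \<subseteq> coords r p S \<and> finite (R j) \<and> card (R j) \<le> r) \<and>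
        (\<forall>j1<k. \<forall>j2<k. j1 \<noteq> j2 \<longrightarrow> R j1 \<inter> R j2 = {}) \<and>
        (\<forall>j<k. \<exists>g. \<forall>x \<in> messages (info_idx r p).
           g (\<lambda>c. if c \<in> R j then encode r p S x c else False) = x (req j))"
      by (rule exists_recovery_sets)
  qed
  show "card (code r p S) = 2 ^ (r * p)" by (rule card_code)
qed

end
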